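(* Let $N\in\mathbb N_0$, $0<\pi_1,\dots,\pi_p<1$ pairwise distinct, $\vec n\in\mathbb N_0^p$ with $|\vec n|\le N$, and $i$ with $n_i\ge1$. The type I multiple Kravchuk polynomials are $$K^{(i)}_{\vec n}(x;\vec\pi,N)=\frac{(-1)^{n_i-1}}{(n_i-1)!(-N)_{|\vec n|-n_i}(1-\pi_i)^{n_i-1}}\prod_{q\ne i}\frac1{(\pi_q-\pi_i)^{n_q}}\sum_{\ell_1,\dots,\ell_p\ge0}\frac{(-n_i+1)_L}{(-N+|\vec n|-n_i)_L}(-x)_{\ell_i}\frac{\pi_i^{-\ell_i}}{\ell_i!}\prod_{q\ne i}\frac{(n_q)_{\ell_q}}{\ell_q!}\Big(\frac{1-\pi_q}{\pi_i-\pi_q}\Big)^{\ell_q},$$ with $L=\ell_1+\cdots+\ell_p$ (the sum is finite since $(-n_i+1)_L=0$ for $L\ge n_i$).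
   Context: Kravchuk weights $w_i(x)=\binom{N}{x}\pi_i^x(1-\pi_i)^{N-x}$, $x\in\{0,\dots,N\}$. Type I polynomials $K^{(i)}_{\vec n}$: $\deg\le n_i-1$ (zero if $n_i=0$), $\sum_i\sum_{k=0}^Nk^jK^{(i)}_{\vec n}(k)w_i(k)=0$ for $0\le j\le|\vec n|-2$, $=1$ for $j=|\vec n|-1$. $(a)_m$ Pochhammer symbol. *)

theory Defs
  imports Complex_Main "HOL-Library.FuncSet" "HOL-Computational_Algebra.Polynomial"
begin

text \<open>Indices of the p weights are 0,...,p-1. |n| = sum of n over {..<p}.\<close>

definition kr_weight :: "nat \<Rightarrow> real \<Rightarrow> nat \<Rightarrow> real" where
  "kr_weight N pr x = real (N choose x) * pr ^ x * (1 - pr) ^ (N - x)"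

definition abs_multi :: "nat \<Rightarrow> (nat \<Rightarrow> nat) \<Rightarrow> nat" where
  "abs_multi p n = (\<Sum>q<p. n q)"

definition is_typeI ::
  "nat \<Rightarrow> nat \<Rightarrow> (nat \<Rightarrow> real) \<Rightarrow> (nat \<Rightarrow> nat) \<Rightarrow> (nat \<Rightarrow> real poly) \<Rightarrow> bool" where
  "is_typeI p N pr n K \<longleftrightarrow>
     (\<forall>i<p. (n i = 0 \<longrightarrow> K i = 0) \<and> (1 \<le> n i \<longrightarrow> degree (K i) \<le> n i - 1)) \<and>
     (\<forall>j. j + 1 \<le> abs_multi p n \<longrightarrow>
        (\<Sum>i<p. \<Sum>k\<le>N. real k ^ j * poly (K i) (real k) * kr_weight N (pr i) k)
          = (if j + 1 = abs_multi p n then 1 else 0))"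

text \<open>The explicit formula. The sum over l_1..l_p >= 0 is taken over l with each l_q < n_i;
  all omitted terms have L >= n_i and hence vanish since (-n_i+1)_L = 0.\<close>
definition kr_formula ::
  "nat \<Rightarrow> nat \<Rightarrow> (nat \<Rightarrow> real) \<Rightarrow> (nat \<Rightarrow> nat) \<Rightarrow> nat \<Rightarrow> real \<Rightarrow> real" where
  "kr_formula p N pr n i x =
     (-1) ^ (n i - 1)
     / (fact (n i - 1) * pochhammer (- real N) (abs_multi p n - n i) * (1 - pr i) ^ (n i - 1))
     * (\<Prod>q\<in>{..<p} - {i}. 1 / (pr q - pr i) ^ n q)
     * (\<Sum>l\<in>PiE {..<p} (\<lambda>_. {..<n i}).
          let L = (\<Sum>q<p. l q) in
          pochhammer (- real (n i) + 1) L
            / pochhammer (- real N + real (abs_multi p n) - real (n i)) L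
          * pochhammer (- x) (l i) * (pr i) powi (- int (l i)) / fact (l i)
          * (\<Prod>q\<in>{..<p} - {i}. pochhammer (real (n q)) (l q) / fact (l q)
                * ((1 - pr q) / (pr i - pr q)) ^ l q))"

end

(* Test the type I conditions against the basis (x - N)_j instead of x^j.  Against w_i, the
   moment of (x - N)_j (-x)_t is an explicit Pochhammer product, so the moment of the explicit
   K^(i) becomes a sum over multi-indices that collapses to a coefficient of a product of
   generalised binomial series; Chu-Vandermonde evaluates what remains.  The resulting
   contributions W_i(j) satisfy W_i(j+1) = (1 - pi_k) W_i(j) + W'_i(j), where W' belongs to
   n - e_k, so their sum over i is forced by induction on |n|; when two entries of n are
   non-zero, the distinctness of the pi_q pins down the base case.  Uniqueness is again by
   induction on |n|: subtracting a multiple of the explicit solution removes the top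
   coefficient of one entry and leaves a solution of the homogeneous problem for n - e_k. *)

theory Submission
  imports Defs "HOL-Computational_Algebra.Formal_Power_Series"
begin

unbundle fps_syntax

definition binomial_series :: "real \<Rightarrow> real \<Rightarrow> real fps" where
  "binomial_series a z = Abs_fps (\<lambda>t. (a gchoose t) * z ^ t)"

lemma binomial_series_nth [simp]: "binomial_series a z $ t = (a gchoose t) * z ^ t"
  by (simp add: binomial_series_def)

lemma binomial_series_add:
  "binomial_series a z * binomial_series b z = binomial_series (a + b) z"
proof (rule fps_ext)
  fix t
  have "(binomial_series a z * binomial_series b z) $ t
      = (\<Sum>k=0..t. (a gchoose k) * (b gchoose (t - k)) * z ^ t)"
    unfolding fps_mult_nth
    by (intro sum.cong refl) (simp add: power_add[symmetric] algebra_simps)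
  also have "\<dots> = (a + b gchoose t) * z ^ t"
    by (simp add: sum_distrib_right[symmetric] gbinomial_Vandermonde)
  finally show "(binomial_series a z * binomial_series b z) $ t = binomial_series (a + b) z $ t"
    by simp
qed

lemma binomial_series_0 [simp]: "binomial_series 0 z = 1"
  by (rule fps_ext) (simp add: gbinomial_0_left)

lemma binomial_series_1: "binomial_series 1 z = 1 + fps_const z * fps_X"
proof (rule fps_ext)
  fix t
  have "((1::real) gchoose t) = (if t \<le> 1 then 1 else 0)"
    using binomial_gbinomial[of 1 t, where 'a=real] by (cases t) (auto simp: binomial_eq_0)
  then show "binomial_series 1 z $ t = (1 + fps_const z * fps_X) $ t"
    by (cases t) auto
qed

lemma binomial_series_Suc_nth:
  "(binomial_series (e + 1) (-1) * G) $ m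
     = (binomial_series e (-1) * G) $ m - (if m = 0 then 0 else (binomial_series e (-1) * G) $ (m - 1))"
proof -
  have "binomial_series (e + 1) (-1) * G = binomial_series e (-1) * G - fps_X * (binomial_series e (-1) * G)"
    by (simp add: binomial_series_add[symmetric] binomial_series_1 algebra_simps
        flip: fps_const_neg)
  then show ?thesis by simp
qed

lemma abs_multi_split:
  "k < p \<Longrightarrow> abs_multi p n = n k + (\<Sum>q\<in>{..<p}-{k}. n q)"
  unfolding abs_multi_def by (simp add: sum.remove)

lemma abs_multi_decrement:
  assumes "k < p" "1 \<le> n k"
  shows "abs_multi p (n(k := n k - 1)) = abs_multi p n - 1" "1 \<le> abs_multi p n"
  using abs_multi_split[OF assms(1), of n] abs_multi_split[OF assms(1), of "n(k := n k - 1)"] assms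
  by auto

lemma abs_multi_pos:
  assumes "0 < abs_multi p n"
  obtains k where "k < p" "1 \<le> n k"
  using assms unfolding abs_multi_def
  by (metis lessThan_iff less_one not_le sum_eq_0_iff finite_lessThan less_nat_zero_code)

lemma pochhammer_minus_of_nat:
  "pochhammer (- real m) t = (if t \<le> m then (-1) ^ t * fact m / fact (m - t) else 0)"
proof (cases "t \<le> m")
  case True
  have "pochhammer (- real m) t = (-1) ^ t * pochhammer (real m - real t + 1) t"
    by (simp add: pochhammer_minus)
  also have "pochhammer (real m - real t + 1) t = (real m gchoose t) * fact t"
    by (simp add: gbinomial_pochhammer')
  also have "(real m gchoose t) = fact m / (fact t * fact (m - t))"
    using True by (simp add: binomial_gbinomial[symmetric] binomial_fact)
  finally show ?thesis using True by simp
next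
  case False
  then show ?thesis by (simp add: pochhammer_of_nat_eq_0_lemma)
qed

lemma neg_one_power_square: "(-1::real) ^ m * (-1) ^ m = 1"
  by (simp add: power_add[symmetric] mult_2[symmetric] power_mult)

lemma pochhammer_pair_eq_0:
  assumes "k \<le> N" "\<not> (t \<le> k \<and> k + j \<le> N)"
  shows "pochhammer (real k - real N) j * pochhammer (- real k) t = (0::real)"
proof (cases "t \<le> k")
  case True
  have "real k - real N = - real (N - k)" using assms(1) by (simp add: of_nat_diff)
  moreover have "pochhammer (- real (N - k)) j = 0"
    by (subst pochhammer_minus_of_nat) (use True assms in auto)
  ultimately show ?thesis by (metis mult_zero_left)
qed (simp add: pochhammer_minus_of_nat)

lemma pochhammer_pair_kr_weight:
  fixes x :: real
  assumes "s + t + j \<le> N"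
  defines "M \<equiv> N - (t + j)"
  shows "pochhammer (real (s + t) - real N) j * pochhammer (- real (s + t)) t * kr_weight N x (s + t)
    = pochhammer (- real N) (t + j) * x ^ t * (1 - x) ^ j *
       (real (M choose s) * x ^ s * (1 - x) ^ (M - s))"
proof -
  have sM: "s \<le> M" "N - (s + t) = (M - s) + j" using assms by auto
  have "real (s + t) - real N = - real (N - (s + t))" using assms by (simp add: of_nat_diff)
  then have "pochhammer (real (s + t) - real N) j = pochhammer (- real (N - (s + t))) j"
    by (simp only:)
  also have "\<dots> = (-1) ^ j * fact (N - (s + t)) / fact (M - s)"
    by (subst pochhammer_minus_of_nat) (use sM in simp)
  finally have p1: "pochhammer (real (s + t) - real N) j = (-1) ^ j * fact (N - (s + t)) / fact (M - s)" .
  have p2: "pochhammer (- real (s + t)) t = (-1) ^ t * fact (s + t) / fact s"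
    by (subst pochhammer_minus_of_nat) simp
  have p3: "pochhammer (- real N) (t + j) = (-1) ^ (t + j) * fact N / fact M"
    using assms by (simp add: pochhammer_minus_of_nat M_def)
  have w: "kr_weight N x (s + t)
      = fact N / (fact (s + t) * fact (N - (s + t))) * x ^ (s + t) * (1 - x) ^ (N - (s + t))"
    using assms unfolding kr_weight_def by (simp add: binomial_fact)
  show ?thesis
    unfolding p1 p2 p3 w binomial_fact[OF sM(1)] sM(2)
    by (simp add: field_simps power_add)
qed

lemma kr_weight_pochhammer_moment:
  fixes x :: real
  shows "(\<Sum>k\<le>N. pochhammer (real k - real N) j * pochhammer (- real k) t * kr_weight N x k)
    = pochhammer (- real N) (t + j) * x ^ t * (1 - x) ^ j"
proof (cases "t + j \<le> N")
  case False
  then have "pochhammer (- real N) (t + j) = 0" by (simp add: pochhammer_minus_of_nat)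
  with False show ?thesis by (auto intro!: sum.neutral simp: pochhammer_pair_eq_0)
next
  case True
  define M where "M = N - (t + j)"
  define f where "f k = pochhammer (real k - real N) j * pochhammer (- real k) t * kr_weight N x k" for k
  have "f k = 0" if "k \<le> N" "k \<notin> {0 + t..M + t}" for k
  proof -
    have "\<not> (t \<le> k \<and> k + j \<le> N)" using that True by (auto simp: M_def)
    then show ?thesis using pochhammer_pair_eq_0[OF that(1)] by (simp add: f_def)
  qed
  then have "(\<Sum>k\<le>N. f k) = (\<Sum>k\<in>{0 + t..M + t}. f k)"
    using True by (intro sum.mono_neutral_right) (auto simp: M_def)
  also have "\<dots> = (\<Sum>s\<in>{0..M}. f (s + t))"
    by (rule sum.shift_bounds_cl_nat_ivl)
  also have "\<dots> = (\<Sum>s\<in>{0..M}. pochhammer (- real N) (t + j) * x ^ t * (1 - x) ^ j *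
       (real (M choose s) * x ^ s * (1 - x) ^ (M - s)))"
    unfolding f_def M_def using True
    by (intro sum.cong refl pochhammer_pair_kr_weight) auto
  also have "\<dots> = pochhammer (- real N) (t + j) * x ^ t * (1 - x) ^ j * (x + (1 - x)) ^ M"
    unfolding binomial_ring by (simp add: sum_distrib_left atLeast0AtMost)
  finally show ?thesis by (simp add: f_def)
qed

lemma sum_PiE_fps_prod:
  fixes f :: "nat \<Rightarrow> nat \<Rightarrow> real" and g :: "nat \<Rightarrow> real"
  assumes "finite I" "\<And>L. b \<le> L \<Longrightarrow> g L = 0"
  shows "(\<Sum>l\<in>PiE I (\<lambda>_. {..<b}). g (\<Sum>q\<in>I. l q) * (\<Prod>q\<in>I. f q (l q)))
        = (\<Sum>L<b. g L * (\<Prod>q\<in>I. Abs_fps (f q)) $ L)"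
  using assms
proof (induction I arbitrary: g rule: finite_induct)
  case empty
  show ?case
  proof (cases b)
    case (Suc b')
    have "(\<Sum>L<b. g L * (1::real fps) $ L) = (\<Sum>L<b. if L = 0 then g 0 else 0)"
      by (intro sum.cong) auto
    also have "\<dots> = g 0" using Suc by (simp add: sum.delta)
    finally show ?thesis by simp
  qed (use empty in simp)
next
  case (insert x I)
  define P where "P = (\<Prod>q\<in>I. Abs_fps (f q))"
  define F where "F t L = f x t * (g (t + L) * P $ L)" for t L
  have inj: "inj_on (\<lambda>(y, g). g(x := y)) ({..<b} \<times> PiE I (\<lambda>_. {..<b}))"
    using inj_combinator[of x I "\<lambda>_. {..<b}"] insert by simp
  have upd: "(\<Sum>q\<in>I. (l(x := t)) q) = (\<Sum>q\<in>I. l q)" "(\<Prod>q\<in>I. f q ((l(x := t)) q)) = (\<Prod>q\<in>I. f q (l q))"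
    for t l using insert by (auto intro!: sum.cong prod.cong)
  have "(\<Sum>l\<in>PiE (insert x I) (\<lambda>_. {..<b}). g (\<Sum>q\<in>insert x I. l q) * (\<Prod>q\<in>insert x I. f q (l q)))
      = (\<Sum>(t, l)\<in>{..<b} \<times> PiE I (\<lambda>_. {..<b}). f x t * (g (t + (\<Sum>q\<in>I. l q)) * (\<Prod>q\<in>I. f q (l q))))"
    unfolding PiE_insert_eq using insert
    by (subst sum.reindex[OF inj]) (simp add: case_prod_beta upd fun_upd_same mult_ac del: fun_upd_apply)
  also have "\<dots> = (\<Sum>t<b. f x t * (\<Sum>l\<in>PiE I (\<lambda>_. {..<b}). g (t + (\<Sum>q\<in>I. l q)) * (\<Prod>q\<in>I. f q (l q))))"
    by (simp add: sum.cartesian_product[symmetric] sum_distrib_left)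
  also have "\<dots> = (\<Sum>t<b. \<Sum>L<b. F t L)"
    unfolding F_def P_def sum_distrib_left[symmetric] using insert
    by (intro sum.cong refl arg_cong[where f = "(*) _"] insert.IH) auto
  also have "\<dots> = (\<Sum>(t, L)\<in>{(t, L). t + L < b}. F t L)"
    unfolding sum.cartesian_product using insert.prems
    by (intro sum.mono_neutral_right) (auto simp: F_def, meson not_less)
  also have "\<dots> = (\<Sum>L<b. \<Sum>t\<le>L. F t (L - t))"
    by (rule sum.triangle_reindex)
  also have "\<dots> = (\<Sum>L<b. g L * (Abs_fps (f x) * P) $ L)"
    unfolding fps_mult_nth atLeast0AtMost
    by (intro sum.cong refl) (auto simp: F_def sum_distrib_left mult_ac intro!: sum.cong)
  finally show ?case using insert by (simp add: P_def)
qed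

lemma sum_triangle_swap:
  fixes h :: "nat \<Rightarrow> nat \<Rightarrow> real"
  shows "(\<Sum>L<b. \<Sum>s\<le>L. h s (L - s)) = (\<Sum>u<b. \<Sum>s<b - u. h s u)"
proof -
  have "(\<Sum>L<b. \<Sum>s\<le>L. h s (L - s)) = (\<Sum>(s, u)\<in>{(s, u). s + u < b}. h s u)"
    by (rule sum.triangle_reindex[symmetric])
  also have "\<dots> = (\<Sum>(u, s)\<in>{(u, s). u + s < b}. h s u)"
    by (rule sum.reindex_bij_witness[where i = prod.swap and j = prod.swap]) auto
  also have "{(u, s). u + s < b} = (SIGMA u:{..<b}. {..<b - u})" by auto
  finally show ?thesis by (simp add: sum.Sigma)
qed

lemma pochhammer_ratio_tail_sum:
  fixes y :: real
  assumes u: "u \<le> m" and N: "r + m < N"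
  shows "(\<Sum>s<Suc m - u. pochhammer (- real m) (u + s) / pochhammer (- real N + real r) (u + s) *
           (pochhammer (- real N) (s + j) * y / fact s))
       = pochhammer (- real m) u * pochhammer (- real N) j * y *
         pochhammer (real r + real u - real j) (m - u) / pochhammer (- real N + real r) m"
proof -
  define a where "a = - real N + real j"
  define c where "c = - real N + real r + real u"
  have split: "pochhammer (- real m) (u + s) / pochhammer (- real N + real r) (u + s)
        * (pochhammer (- real N) (s + j) * y / fact s)
     = (pochhammer (- real m) u / pochhammer (- real N + real r) u * pochhammer (- real N) j * y) *
       ((pochhammer a s * pochhammer (- real (m - u)) s) / (fact s * pochhammer c s))" for s
  proof -
    have "pochhammer (- real m) (u + s) = pochhammer (- real m) u * pochhammer (- real (m - u)) s"
      using u by (simp add: pochhammer_product' of_nat_diff)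
    moreover have "pochhammer (- real N + real r) (u + s) = pochhammer (- real N + real r) u * pochhammer c s"
      by (simp add: pochhammer_product' c_def add.assoc)
    moreover have "pochhammer (- real N) (s + j) = pochhammer (- real N) j * pochhammer a s"
      by (simp add: pochhammer_product' a_def add.commute[of s j])
    ultimately show ?thesis by (simp add: field_simps)
  qed
  have c: "\<forall>i \<in> {0..<m - u}. c \<noteq> - of_nat i"
    using N u by (auto simp: c_def)
  have "(\<Sum>s<Suc m - u. pochhammer (- real m) (u + s) / pochhammer (- real N + real r) (u + s)
          * (pochhammer (- real N) (s + j) * y / fact s))
     = (pochhammer (- real m) u / pochhammer (- real N + real r) u * pochhammer (- real N) j * y) *
       (\<Sum>s\<in>{0..m - u}. (pochhammer a s * pochhammer (- real (m - u)) s) / (fact s * pochhammer c s))"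
    unfolding split sum_distrib_left using u
    by (intro sum.cong) (auto simp: Suc_diff_le atLeast0AtMost lessThan_Suc_atMost)
  also have "(\<Sum>s\<in>{0..m - u}. (pochhammer a s * pochhammer (- real (m - u)) s) / (fact s * pochhammer c s))
      = pochhammer (c - a) (m - u) / pochhammer c (m - u)"
    using Vandermonde_pochhammer[OF c] by simp
  also have "c - a = real r + real u - real j" by (simp add: a_def c_def)
  also have "pochhammer (- real N + real r) u * pochhammer c (m - u) = pochhammer (- real N + real r) m"
    using pochhammer_product[of u m "- real N + real r"] u by (simp add: c_def add.assoc)
  then have "pochhammer (- real m) u / pochhammer (- real N + real r) u * pochhammer (- real N) j * y *
       (pochhammer (real r + real u - real j) (m - u) / pochhammer c (m - u))
     = pochhammer (- real m) u * pochhammer (- real N) j * y *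
         pochhammer (real r + real u - real j) (m - u) / pochhammer (- real N + real r) m"
    by (simp add: field_simps)
  finally show ?thesis .
qed

lemma binomial_series_coeff_sum:
  fixes G :: "real fps"
  shows "(\<Sum>u<Suc m. G $ u * (pochhammer (- real m) u * pochhammer (real r + real u - real j) (m - u)))
     = (-1) ^ m * fact m * (binomial_series (real r + real m - 1 - real j) (-1) * G) $ m"
proof -
  define a where "a = real r + real m - 1 - real j"
  have coeff: "(binomial_series a (-1) * G) $ m = (\<Sum>u<Suc m. G $ u * ((a gchoose (m - u)) * (-1) ^ (m - u)))"
    unfolding mult.commute[of "binomial_series a (-1)"] fps_mult_nth
    by (simp add: atLeast0AtMost lessThan_Suc_atMost)
  have summand: "pochhammer (- real m) u * pochhammer (real r + real u - real j) (m - u)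
      = (-1) ^ m * fact m * ((a gchoose (m - u)) * (-1) ^ (m - u))" if "u \<le> m" for u
  proof -
    have "a - real (m - u) + 1 = real r + real u - real j" using that by (simp add: a_def of_nat_diff)
    then have "pochhammer (real r + real u - real j) (m - u) = (a gchoose (m - u)) * fact (m - u)"
      by (simp add: gbinomial_pochhammer')
    moreover have "(-1::real) ^ m = (-1) ^ u * (-1) ^ (m - u)"
      using that by (simp add: power_add[symmetric])
    ultimately show ?thesis
      using that neg_one_power_square[of "m - u"] by (simp add: pochhammer_minus_of_nat field_simps)
  qed
  show ?thesis unfolding a_def[symmetric] coeff sum_distrib_left
    by (intro sum.cong) (auto simp: summand)
qed

lemma pochhammer_ratio_conv_coeff:
  fixes G :: "real fps" and y :: real
  assumes "r + m < N"
  shows "(\<Sum>L<Suc m. pochhammer (- real m) L / pochhammer (- real N + real r) L *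
            (Abs_fps (\<lambda>s. pochhammer (- real N) (s + j) * y / fact s) * G) $ L)
       = pochhammer (- real N) j * y / pochhammer (- real N + real r) m *
         ((-1) ^ m * fact m * (binomial_series (real r + real m - 1 - real j) (-1) * G) $ m)"
proof -
  define h where "h = (\<lambda>L. pochhammer (- real m) L / pochhammer (- real N + real r) L)"
  define f where "f = (\<lambda>s. pochhammer (- real N) (s + j) * y / fact s)"
  define C where "C = pochhammer (- real N) j * y / pochhammer (- real N + real r) m"
  have "(\<Sum>L<Suc m. h L * (Abs_fps f * G) $ L) = (\<Sum>L<Suc m. \<Sum>s\<le>L. h (s + (L - s)) * f s * G $ (L - s))"
    unfolding fps_mult_nth atLeast0AtMost by (simp add: sum_distrib_left mult_ac)
  also have "\<dots> = (\<Sum>u<Suc m. \<Sum>s<Suc m - u. h (s + u) * f s * G $ u)"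
    by (rule sum_triangle_swap)
  also have "\<dots> = (\<Sum>u<Suc m. C * (G $ u * (pochhammer (- real m) u * pochhammer (real r + real u - real j) (m - u))))"
  proof (intro sum.cong refl)
    fix u assume "u \<in> {..<Suc m}"
    then have "(\<Sum>s<Suc m - u. h (u + s) * f s) = pochhammer (- real m) u * pochhammer (- real N) j * y *
         pochhammer (real r + real u - real j) (m - u) / pochhammer (- real N + real r) m"
      unfolding h_def f_def using assms by (intro pochhammer_ratio_tail_sum) auto
    moreover have "(\<Sum>s<Suc m - u. h (s + u) * f s * G $ u) = (\<Sum>s<Suc m - u. h (u + s) * f s) * G $ u"
      by (simp add: sum_distrib_right add.commute[of _ u])
    ultimately show "(\<Sum>s<Suc m - u. h (s + u) * f s * G $ u)
        = C * (G $ u * (pochhammer (- real m) u * pochhammer (real r + real u - real j) (m - u)))"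
      by (simp add: C_def)
  qed
  also have "\<dots> = C * ((-1) ^ m * fact m * (binomial_series (real r + real m - 1 - real j) (-1) * G) $ m)"
    by (simp only: sum_distrib_left[symmetric] binomial_series_coeff_sum)
  finally show ?thesis by (simp only: h_def f_def C_def)
qed

definition neg_pochhammer_poly :: "nat \<Rightarrow> real poly" where
  "neg_pochhammer_poly t = (\<Prod>s<t. [:real s, -1:])"

lemma poly_neg_pochhammer_poly: "poly (neg_pochhammer_poly t) x = pochhammer (- x) t"
  by (simp add: neg_pochhammer_poly_def poly_prod pochhammer_prod atLeast0LessThan)

lemma degree_neg_pochhammer_poly: "degree (neg_pochhammer_poly t) \<le> t"
proof -
  have "degree (neg_pochhammer_poly t) \<le> (\<Sum>s<t. degree [:real s, -1:])"
    unfolding neg_pochhammer_poly_def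
    using degree_prod_sum_le[of "{..<t}" "\<lambda>s. [:real s, -1:]"] by (simp add: o_def)
  also have "\<dots> \<le> (\<Sum>s<t. 1)" by (intro sum_mono) simp
  finally show ?thesis by simp
qed

fun shifted_pochhammer_poly :: "nat \<Rightarrow> nat \<Rightarrow> real poly" where
  "shifted_pochhammer_poly N 0 = 1"
| "shifted_pochhammer_poly N (Suc j) = shifted_pochhammer_poly N j * [:real j - real N, 1:]"

lemma poly_shifted_pochhammer_poly: "poly (shifted_pochhammer_poly N j) x = pochhammer (x - real N) j"
  by (induction j) (simp_all add: pochhammer_Suc algebra_simps)

lemma shifted_pochhammer_poly_monic:
  "degree (shifted_pochhammer_poly N j) = j \<and> lead_coeff (shifted_pochhammer_poly N j) = 1"
proof (induction j)
  case (Suc j)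
  define T where "T = shifted_pochhammer_poly N j"
  have T: "T \<noteq> 0" "degree T = j" "lead_coeff T = 1" using Suc by (auto simp: T_def)
  then have "degree (T * [:real j - real N, 1:]) = Suc j"
    by (subst degree_mult_eq) auto
  moreover have "lead_coeff (T * [:real j - real N, 1:]) = 1"
    using T(3) by (simp only: lead_coeff_mult) simp
  ultimately show ?case by (simp add: T_def)
qed simp

lemma degree_less_if_coeff_eq_0:
  fixes f :: "'a::zero poly"
  assumes "degree f \<le> d" "coeff f d = 0" "f \<noteq> 0"
  shows "degree f < d"
  using assms leading_coeff_neq_0[OF assms(3)] le_neq_implies_less by blast

lemma functional_eq_coeff_if_shifted_pochhammer:
  fixes \<Phi> :: "real poly \<Rightarrow> real"
  assumes add: "\<And>S T. \<Phi> (S + T) = \<Phi> S + \<Phi> T"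
    and smult: "\<And>c T. \<Phi> (smult c T) = c * \<Phi> T"
    and basis: "\<And>j. j + 1 \<le> A \<Longrightarrow> \<Phi> (shifted_pochhammer_poly N j) = (if j + 1 = A then 1 else 0)"
  shows "degree T \<le> A - 1 \<Longrightarrow> 1 \<le> A \<Longrightarrow> \<Phi> T = coeff T (A - 1)"
proof (induction "degree T" arbitrary: T rule: less_induct)
  case less
  define d where "d = degree T"
  define c where "c = coeff T d"
  define R where "R = T - smult c (shifted_pochhammer_poly N d)"
  have tp: "degree (shifted_pochhammer_poly N d) = d" "coeff (shifted_pochhammer_poly N d) d = 1"
    using shifted_pochhammer_poly_monic[of N d] by auto
  have "degree R \<le> d"
    unfolding R_def using degree_diff_le[of T d] degree_smult_le tp by (simp add: d_def)
  moreover have "coeff R d = 0" unfolding R_def c_def using tp by simp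
  ultimately have "\<Phi> R = coeff R (A - 1)"
  proof (cases "R = 0")
    case True
    then show ?thesis using smult[of 0 0] by simp
  qed (use less d_def degree_less_if_coeff_eq_0 in auto)
  moreover have T: "T = smult c (shifted_pochhammer_poly N d) + R" unfolding R_def by simp
  then have "\<Phi> T = c * \<Phi> (shifted_pochhammer_poly N d) + \<Phi> R"
    by (metis add smult)
  moreover have "coeff T (A - 1) = c * coeff (shifted_pochhammer_poly N d) (A - 1) + coeff R (A - 1)"
    by (subst T) simp
  moreover have "coeff (shifted_pochhammer_poly N d) (A - 1) = (if d + 1 = A then 1 else 0)"
    using tp less by (auto simp: d_def coeff_eq_0)
  moreover have "\<Phi> (shifted_pochhammer_poly N d) = (if d + 1 = A then 1 else 0)"
    using basis less by (simp add: d_def)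
  ultimately show ?case by simp
qed

definition typeI_degree_bounds :: "nat \<Rightarrow> (nat \<Rightarrow> nat) \<Rightarrow> (nat \<Rightarrow> real poly) \<Rightarrow> bool" where
  "typeI_degree_bounds p n Q \<longleftrightarrow> (\<forall>i<p. (n i = 0 \<longrightarrow> Q i = 0) \<and> degree (Q i) \<le> n i - 1)"

lemma typeI_degree_bounds_diff:
  "typeI_degree_bounds p n Q \<Longrightarrow> typeI_degree_bounds p n P
    \<Longrightarrow> typeI_degree_bounds p n (\<lambda>i. Q i - smult c (P i))"
  unfolding typeI_degree_bounds_def
  by (metis (no_types, lifting) degree_diff_le degree_smult_le diff_zero order_trans smult_0_right)

lemma typeI_degree_bounds_decrement:
  assumes "k < p" "typeI_degree_bounds p n Q" "coeff (Q k) (n k - 1) = 0"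
  shows "typeI_degree_bounds p (n(k := n k - 1)) Q"
proof -
  have "degree (Q k) \<le> n k - 1" "n k = 0 \<longrightarrow> Q k = 0"
    using assms(1,2) by (auto simp: typeI_degree_bounds_def)
  then have "(n k - 1 = 0 \<longrightarrow> Q k = 0) \<and> degree (Q k) \<le> n k - 1 - 1"
    using assms(3) degree_less_if_coeff_eq_0[of "Q k" "n k - 1"] by fastforce
  then show ?thesis using assms(2) by (auto simp: typeI_degree_bounds_def)
qed

locale kravchuk_weights =
  fixes p :: nat and pr :: "nat \<Rightarrow> real"
  assumes pr_range: "\<And>q. q < p \<Longrightarrow> 0 < pr q \<and> pr q < 1"
    and pr_inj: "inj_on pr {..<p}"
begin

lemma pr_neq: "i < p \<Longrightarrow> q < p \<Longrightarrow> i \<noteq> q \<Longrightarrow> pr i \<noteq> pr q"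
  using pr_inj by (auto dest: inj_onD)

definition zeta :: "nat \<Rightarrow> nat \<Rightarrow> real" where
  "zeta i q = (1 - pr q) / (pr i - pr q)"

definition gen_prod :: "(nat \<Rightarrow> nat) \<Rightarrow> nat \<Rightarrow> real fps" where
  "gen_prod n i = (\<Prod>q\<in>{..<p}-{i}. binomial_series (- real (n q)) (- zeta i q))"

definition scale :: "(nat \<Rightarrow> nat) \<Rightarrow> nat \<Rightarrow> real" where
  "scale n i = (\<Prod>q\<in>{..<p}-{i}. 1 / (pr q - pr i) ^ n q)"

(* Up to the factor (-N)_j / (-N)_(|n|-1), wcoeff n i j is the moment of K^(i) against
   (x - N)_j w_i. *)
definition wcoeff :: "(nat \<Rightarrow> nat) \<Rightarrow> nat \<Rightarrow> nat \<Rightarrow> real" where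
  "wcoeff n i j = (if n i = 0 then 0 else
     (1 - pr i) powi (int j - int (n i) + 1) * scale n i *
     (binomial_series (real (abs_multi p n) - 2 - real j) (-1) * gen_prod n i) $ (n i - 1))"

lemma scale_decrement:
  assumes "k < p" "1 \<le> n k" "i \<noteq> k" "pr k \<noteq> pr i"
  shows "scale (n(k := n k - 1)) i = scale n i * (pr k - pr i)"
proof -
  have kin: "k \<in> {..<p} - {i}" using assms by auto
  define R where "R = (\<Prod>q\<in>{..<p}-{i}-{k}. 1 / (pr q - pr i) ^ n q)"
  have a: "scale (n(k := n k - 1)) i = 1 / (pr k - pr i) ^ (n k - 1) * R"
    unfolding scale_def R_def by (subst prod.remove[OF _ kin]) (auto intro!: prod.cong)
  have b: "1 / (pr k - pr i) ^ (n k - 1) = 1 / (pr k - pr i) ^ n k * (pr k - pr i)"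
    using assms(2,4) by (cases "n k") (auto simp: field_simps)
  have c: "scale n i = 1 / (pr k - pr i) ^ n k * R"
    unfolding scale_def R_def by (subst prod.remove[OF _ kin]) auto
  show ?thesis unfolding a b c by (simp only: mult_ac)
qed

lemma gen_prod_decrement:
  assumes "k < p" "1 \<le> n k" "i \<noteq> k"
  shows "gen_prod n i = gen_prod (n(k := n k - 1)) i * binomial_series (-1) (- zeta i k)"
proof -
  have kin: "k \<in> {..<p} - {i}" using assms by auto
  define R where "R = (\<Prod>q\<in>{..<p}-{i}-{k}. binomial_series (- real (n q)) (- zeta i q))"
  have "gen_prod (n(k := n k - 1)) i = binomial_series (- real (n k - 1)) (- zeta i k) * R"
    unfolding gen_prod_def R_def by (subst prod.remove[OF _ kin]) (auto intro!: prod.cong)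
  moreover have "gen_prod n i = binomial_series (- real (n k)) (- zeta i k) * R"
    unfolding gen_prod_def R_def by (subst prod.remove[OF _ kin]) auto
  moreover have "binomial_series (- real (n k)) (- zeta i k)
      = binomial_series (- real (n k - 1)) (- zeta i k) * binomial_series (-1) (- zeta i k)"
    using assms(2) by (simp add: binomial_series_add)
  ultimately show ?thesis by (simp add: mult_ac)
qed


lemma gen_prod_step:
  assumes "k < p" "1 \<le> n k" "i < p" "i \<noteq> k"
  shows "fps_const (1 - pr i) * (binomial_series e (-1) * gen_prod n i)
     = fps_const (1 - pr k) * (binomial_series (e + 1) (-1) * gen_prod n i)
       + fps_const (pr k - pr i) * (binomial_series e (-1) * gen_prod (n(k := n k - 1)) i)"
proof -
  define G where "G = gen_prod n i"
  define a where "a = 1 + fps_const (- zeta i k) * fps_X"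
  have ne: "pr k - pr i \<noteq> 0" using pr_neq[of k i] assms by auto
  have "binomial_series (-1) (- zeta i k) * a = 1"
    using binomial_series_add[of "-1" "- zeta i k" 1] by (simp add: a_def binomial_series_1)
  then have G': "gen_prod (n(k := n k - 1)) i = G * a"
    using gen_prod_decrement[of k n i, OF assms(1,2,4)] by (simp add: G_def mult.assoc)
  have b: "binomial_series (e + 1) (-1) = binomial_series e (-1) * (1 - fps_X)"
    by (simp add: binomial_series_add[symmetric] binomial_series_1 flip: fps_const_neg)
  have "fps_const (1 - pr k) * (binomial_series (e + 1) (-1) * G)
        + fps_const (pr k - pr i) * (binomial_series e (-1) * (G * a))
      = binomial_series e (-1) * G * (fps_const (1 - pr k) * (1 - fps_X) + fps_const (pr k - pr i) * a)"
    unfolding b by (simp add: algebra_simps)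
  also have "fps_const (1 - pr k) * (1 - fps_X) + fps_const (pr k - pr i) * a
      = fps_const (1 - pr i) + fps_const (- (1 - pr k) + (pr k - pr i) * (- zeta i k)) * fps_X"
    by (rule fps_ext) (simp add: a_def fps_X_nth algebra_simps)
  also have "- (1 - pr k) + (pr k - pr i) * (- zeta i k) = 0"
    using ne by (simp add: zeta_def field_simps)
  finally show ?thesis unfolding G' by (simp add: G_def algebra_simps)
qed

lemma wcoeff_rec_offdiag:
  assumes k: "k < p" "1 \<le> n k" and i: "i < p" "i \<noteq> k"
  shows "wcoeff n i (Suc j) = (1 - pr k) * wcoeff n i j + wcoeff (n(k := n k - 1)) i j"
proof (cases "n i = 0")
  case True
  then show ?thesis using i by (simp add: wcoeff_def)
next
  case False
  define n' where "n' = n(k := n k - 1)"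
  define e where "e = real (abs_multi p n') - 2 - real j"
  define P where "P = (1 - pr i) powi (int j - int (n i) + 1)"
  define X where "X = (binomial_series e (-1) * gen_prod n i) $ (n i - 1)"
  define Y where "Y = (binomial_series (e + 1) (-1) * gen_prod n i) $ (n i - 1)"
  define Z where "Z = (binomial_series e (-1) * gen_prod n' i) $ (n i - 1)"
  have A: "real (abs_multi p n) - 2 - real (Suc j) = e" "real (abs_multi p n) - 2 - real j = e + 1"
    using abs_multi_decrement[of k p n, OF k] by (auto simp: e_def n'_def of_nat_diff)
  have "(1 - pr i) powi (int (Suc j) - int (n i) + 1) = (1 - pr i) powi ((int j - int (n i) + 1) + 1)"
    by (simp add: algebra_simps)
  also have "\<dots> = (1 - pr i) * P"
    using pr_range[OF i(1)] unfolding P_def by (intro power_int_add_1') auto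
  finally have P: "(1 - pr i) powi (int (Suc j) - int (n i) + 1) = (1 - pr i) * P" .
  have XYZ: "(1 - pr i) * X = (1 - pr k) * Y + (pr k - pr i) * Z"
    using arg_cong[OF gen_prod_step[of k n i e, OF k i], of "\<lambda>f. f $ (n i - 1)"]
    by (simp add: X_def Y_def Z_def n'_def)
  have "wcoeff n i (Suc j) = P * scale n i * ((1 - pr i) * X)"
    using False unfolding wcoeff_def A P X_def by (simp only: if_False mult_ac)
  also have "\<dots> = P * scale n i * ((1 - pr k) * Y + (pr k - pr i) * Z)"
    by (simp only: XYZ)
  also have "\<dots> = (1 - pr k) * wcoeff n i j + wcoeff n' i j"
  proof -
    have "scale n' i = scale n i * (pr k - pr i)"
      using scale_decrement[of k n i] pr_neq[of k i] k i by (simp add: n'_def)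
    moreover have "n' i = n i" using i by (simp add: n'_def)
    ultimately have "wcoeff n' i j = P * (scale n i * (pr k - pr i)) * Z"
      using False unfolding wcoeff_def e_def[symmetric] P_def Z_def by simp
    moreover have "wcoeff n i j = P * scale n i * Y"
      using False unfolding wcoeff_def A P_def Y_def by simp
    ultimately show ?thesis by (simp add: algebra_simps)
  qed
  finally show ?thesis by (simp only: n'_def)
qed

lemma wcoeff_rec_diag:
  assumes k: "k < p" "1 \<le> n k"
  shows "wcoeff n k (Suc j) = (1 - pr k) * wcoeff n k j + wcoeff (n(k := n k - 1)) k j"
proof -
  define n' where "n' = n(k := n k - 1)"
  define m where "m = n k - 1"
  define e where "e = real (abs_multi p n') - 2 - real j"
  define P where "P = (1 - pr k) powi (int j - int m + 1)"
  define F where "F = binomial_series e (-1) * gen_prod n k"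
  have nk: "n k = Suc m" "n' k = m" using k by (auto simp: m_def n'_def)
  have A: "real (abs_multi p n) - 2 - real (Suc j) = e" "real (abs_multi p n) - 2 - real j = e + 1"
    using abs_multi_decrement[of k p n, OF k] by (auto simp: e_def n'_def of_nat_diff)
  have same: "scale n' k = scale n k" "gen_prod n' k = gen_prod n k"
    unfolding scale_def gen_prod_def n'_def by (auto intro!: prod.cong)
  have "(1 - pr k) * (1 - pr k) powi (int j - int (n k) + 1) = (1 - pr k) powi ((int j - int (n k) + 1) + 1)"
    using pr_range[OF k(1)] by (intro power_int_add_1'[symmetric]) auto
  then have P': "(1 - pr k) * (1 - pr k) powi (int j - int (n k) + 1) = P"
    by (simp add: P_def nk algebra_simps)
  have W1: "wcoeff n k (Suc j) = P * scale n k * F $ m"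
    unfolding wcoeff_def A F_def P_def by (simp add: nk algebra_simps)
  have W2: "(1 - pr k) * wcoeff n k j = P * scale n k * (F $ m - (if m = 0 then 0 else F $ (m - 1)))"
    unfolding wcoeff_def A F_def P'[symmetric] binomial_series_Suc_nth by (simp add: nk)
  have W3: "wcoeff n' k j = (if m = 0 then 0 else P * scale n k * F $ (m - 1))"
    unfolding wcoeff_def e_def[symmetric] F_def P_def same nk by simp
  show ?thesis
    unfolding n'_def[symmetric] W1 W2 W3 by (cases "m = 0") (simp_all add: algebra_simps)
qed

lemma sum_wcoeff_rec:
  assumes "k < p" "1 \<le> n k"
  shows "(\<Sum>i<p. wcoeff n i (Suc j))
       = (1 - pr k) * (\<Sum>i<p. wcoeff n i j) + (\<Sum>i<p. wcoeff (n(k := n k - 1)) i j)"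
proof -
  have "wcoeff n i (Suc j) = (1 - pr k) * wcoeff n i j + wcoeff (n(k := n k - 1)) i j" if "i < p" for i
    using wcoeff_rec_diag[of k n j, OF assms] wcoeff_rec_offdiag[of k n i j, OF assms that] by (cases "i = k") auto
  then show ?thesis by (simp add: sum.distrib sum_distrib_left)
qed

lemma sum_wcoeff_concentrated:
  assumes k: "k < p" "1 \<le> n k" and z: "\<And>q. q < p \<Longrightarrow> q \<noteq> k \<Longrightarrow> n q = 0"
  shows "(\<Sum>i<p. wcoeff n i 0) = (if n k = 1 then 1 else 0)"
proof -
  have "(\<Sum>i<p. wcoeff n i 0) = wcoeff n k 0 + (\<Sum>i\<in>{..<p}-{k}. wcoeff n i 0)"
    using k by (simp add: sum.remove)
  also have "(\<Sum>i\<in>{..<p}-{k}. wcoeff n i 0) = 0"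
    using z by (intro sum.neutral) (auto simp: wcoeff_def)
  also have "abs_multi p n = n k"
    using abs_multi_split[OF k(1), of n] z by simp
  then have "wcoeff n k 0 = (1 - pr k) powi (1 - int (n k)) *
      ((real (n k) - 2 gchoose (n k - 1)) * (-1) ^ (n k - 1))"
    using z k unfolding wcoeff_def scale_def gen_prod_def by (simp add: prod.neutral)
  also have "\<dots> = (if n k = 1 then 1 else 0)"
  proof (cases "n k = 1")
    case False
    then have eq: "real (n k) - 2 = real (n k - 2)" using k by (simp add: of_nat_diff)
    have "n k - 2 < n k - 1" using k False by simp
    then have "(real (n k - 2) gchoose (n k - 1)) = 0"
      by (simp only: binomial_gbinomial[symmetric] binomial_eq_0 of_nat_0)
    then show ?thesis using False unfolding eq by simp
  qed simp
  finally show ?thesis by simp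
qed

lemma sum_wcoeff:
  "abs_multi p n = A \<Longrightarrow> j + 1 \<le> A \<Longrightarrow> (\<Sum>i<p. wcoeff n i j) = (if j + 1 = A then 1 else 0)"
proof (induction A arbitrary: n j)
  case (Suc A)
  obtain k where k: "k < p" "1 \<le> n k"
    using abs_multi_pos[of p n] Suc.prems by auto
  have IH: "(\<Sum>i<p. wcoeff (n(k' := n k' - 1)) i j) = (if j + 1 = A then 1 else 0)"
    if "k' < p" "1 \<le> n k'" "j + 1 \<le> A" for k' j
  proof -
    have "abs_multi p (n(k' := n k' - 1)) = A"
      using abs_multi_decrement[of k' p n, OF that(1,2)] Suc.prems(1) by simp
    then show ?thesis using that(3) by (rule Suc.IH)
  qed
  show ?case using Suc.prems(2)
  proof (induction j)
    case 0
    show ?case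
    proof (cases "\<exists>k'<p. k' \<noteq> k \<and> 1 \<le> n k'")
      case True
      then obtain k' where k': "k' < p" "k' \<noteq> k" "1 \<le> n k'" by blast
      then have "1 \<le> A"
        using abs_multi_split[OF k(1), of n] Suc.prems(1) k
          member_le_sum[of k' "{..<p} - {k}" n] by auto
      then have "(pr k' - pr k) * (\<Sum>i<p. wcoeff n i 0) = 0"
        using sum_wcoeff_rec[of k n 0, OF k] sum_wcoeff_rec[of k' n 0, OF k'(1,3)]
          IH[OF k] IH[OF k'(1,3)] by (simp add: algebra_simps) metis
      moreover have "pr k' \<noteq> pr k" using pr_neq k k' by blast
      ultimately show ?thesis using \<open>1 \<le> A\<close> by simp
    next
      case False
      then have z: "\<And>q. q < p \<Longrightarrow> q \<noteq> k \<Longrightarrow> n q = 0" by force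
      then have "n k = Suc A" using abs_multi_split[OF k(1), of n] Suc.prems(1) by simp
      then show ?thesis using sum_wcoeff_concentrated[of k n, OF k z] by simp
    qed
  next
    case (Suc j)
    then show ?case using sum_wcoeff_rec[of k n j, OF k] IH[OF k, of j] by simp
  qed
qed simp

definition ratio_coeff :: "nat \<Rightarrow> (nat \<Rightarrow> nat) \<Rightarrow> nat \<Rightarrow> nat \<Rightarrow> real" where
  "ratio_coeff N n i L = pochhammer (- real (n i) + 1) L
     / pochhammer (- real N + real (abs_multi p n) - real (n i)) L"

definition series_coeff :: "(nat \<Rightarrow> nat) \<Rightarrow> nat \<Rightarrow> nat \<Rightarrow> nat \<Rightarrow> real" where
  "series_coeff n i q t = pochhammer (real (n q)) t / fact t * ((1 - pr q) / (pr i - pr q)) ^ t"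

definition kr_const :: "nat \<Rightarrow> (nat \<Rightarrow> nat) \<Rightarrow> nat \<Rightarrow> real" where
  "kr_const N n i = (-1) ^ (n i - 1)
     / (fact (n i - 1) * pochhammer (- real N) (abs_multi p n - n i) * (1 - pr i) ^ (n i - 1))
     * scale n i"

definition kr_term :: "nat \<Rightarrow> (nat \<Rightarrow> nat) \<Rightarrow> nat \<Rightarrow> (nat \<Rightarrow> nat) \<Rightarrow> real" where
  "kr_term N n i l = ratio_coeff N n i (\<Sum>q<p. l q) * pr i powi (- int (l i)) / fact (l i)
     * (\<Prod>q\<in>{..<p} - {i}. series_coeff n i q (l q))"

definition kr_poly :: "nat \<Rightarrow> (nat \<Rightarrow> nat) \<Rightarrow> nat \<Rightarrow> real poly" where
  "kr_poly N n i = (if n i = 0 then 0 else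
     smult (kr_const N n i)
       (\<Sum>l\<in>PiE {..<p} (\<lambda>_. {..<n i}). smult (kr_term N n i l) (neg_pochhammer_poly (l i))))"

lemma kr_poly_eq_0: "n i = 0 \<Longrightarrow> kr_poly N n i = 0"
  by (simp add: kr_poly_def)

lemma poly_kr_poly: "poly (kr_poly N n i) x =
   (if n i = 0 then 0
    else kr_const N n i * (\<Sum>l\<in>PiE {..<p} (\<lambda>_. {..<n i}). kr_term N n i l * pochhammer (- x) (l i)))"
  by (simp add: kr_poly_def poly_sum poly_neg_pochhammer_poly)

lemma poly_kr_poly_eq_kr_formula: "1 \<le> n i \<Longrightarrow> poly (kr_poly N n i) x = kr_formula p N pr n i x"
  unfolding poly_kr_poly kr_formula_def kr_const_def scale_def kr_term_def ratio_coeff_def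
    series_coeff_def Let_def
  by (simp add: sum_distrib_left mult_ac)

lemma degree_kr_poly:
  assumes "i < p"
  shows "degree (kr_poly N n i) \<le> n i - 1"
proof -
  have "degree (smult (kr_term N n i l) (neg_pochhammer_poly (l i))) \<le> n i - 1"
    if "l \<in> PiE {..<p} (\<lambda>_. {..<n i})" for l
  proof -
    have "l i < n i" using that assms by (auto simp: PiE_iff)
    then have "l i \<le> n i - 1" by simp
    then show ?thesis
      using order_trans[OF degree_smult_le degree_neg_pochhammer_poly] order_trans by blast
  qed
  then have "degree (\<Sum>l\<in>PiE {..<p} (\<lambda>_. {..<n i}). smult (kr_term N n i l) (neg_pochhammer_poly (l i)))
      \<le> n i - 1"
    by (intro degree_sum_le) (auto simp: finite_PiE)
  then show ?thesis by (simp add: kr_poly_def order_trans[OF degree_smult_le])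
qed

lemma series_coeff_fps: "Abs_fps (series_coeff n i q) = binomial_series (- real (n q)) (- zeta i q)"
proof (rule fps_ext)
  fix t
  have "(- real (n q) gchoose t) * (- zeta i q) ^ t
      = ((-1) ^ t * (-1) ^ t) * (pochhammer (real (n q)) t / fact t * zeta i q ^ t)"
    by (simp add: gbinomial_pochhammer power_minus[of "zeta i q"] field_simps)
  then show "Abs_fps (series_coeff n i q) $ t = binomial_series (- real (n q)) (- zeta i q) $ t"
    by (simp add: series_coeff_def zeta_def neg_one_power_square)
qed

lemma ratio_coeff_eq_0:
  assumes "1 \<le> n i" "n i \<le> L"
  shows "ratio_coeff N n i L = 0"
proof -
  have eq: "- real (n i) + 1 = - real (n i - 1)" using assms(1) by (simp add: of_nat_diff)
  show ?thesis
    unfolding ratio_coeff_def eq by (subst pochhammer_minus_of_nat) (use assms in simp)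
qed

lemma kr_poly_moment_expand:
  fixes N j :: nat
  assumes i: "i < p" and ni: "1 \<le> n i"
  defines "f \<equiv> \<lambda>s. pochhammer (- real N) (s + j) * (1 - pr i) ^ j / fact s"
  shows "(\<Sum>k\<le>N. pochhammer (real k - real N) j * poly (kr_poly N n i) (real k) * kr_weight N (pr i) k)
     = kr_const N n i * (\<Sum>L<n i. ratio_coeff N n i L * (Abs_fps f * gen_prod n i) $ L)"
proof -
  define PI where "PI = PiE {..<p} (\<lambda>_. {..<n i})"
  define g where "g q = (if q = i then f else series_coeff n i q)" for q
  have "(\<Sum>k\<le>N. pochhammer (real k - real N) j * poly (kr_poly N n i) (real k) * kr_weight N (pr i) k)
      = kr_const N n i * (\<Sum>l\<in>PI. kr_term N n i l *
          (\<Sum>k\<le>N. pochhammer (real k - real N) j * pochhammer (- real k) (l i) * kr_weight N (pr i) k))"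
    unfolding poly_kr_poly PI_def using ni
    by (simp add: sum_distrib_left sum_distrib_right mult_ac sum.swap[of _ "{..N}"])
  also have "\<dots> = kr_const N n i * (\<Sum>l\<in>PI. ratio_coeff N n i (\<Sum>q<p. l q) * (\<Prod>q<p. g q (l q)))"
  proof (intro arg_cong[where f = "(*) _"] sum.cong refl)
    fix l
    define R where "R = ratio_coeff N n i (\<Sum>q<p. l q)"
    define Pr where "Pr = (\<Prod>q\<in>{..<p}-{i}. series_coeff n i q (l q))"
    have "pr i \<noteq> 0" using pr_range[OF i] by simp
    then have "kr_term N n i l = R * Pr / (fact (l i) * pr i ^ l i)"
      by (simp add: kr_term_def R_def Pr_def power_int_minus divide_inverse)
    moreover have "(\<Prod>q<p. g q (l q)) = f (l i) * Pr"
      using i by (simp add: prod.remove g_def Pr_def)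
    ultimately show "kr_term N n i l * (\<Sum>k\<le>N. pochhammer (real k - real N) j
          * pochhammer (- real k) (l i) * kr_weight N (pr i) k)
        = ratio_coeff N n i (\<Sum>q<p. l q) * (\<Prod>q<p. g q (l q))"
      using \<open>pr i \<noteq> 0\<close> unfolding kr_weight_pochhammer_moment f_def R_def[symmetric]
      by simp
  qed
  also have "(\<Sum>l\<in>PI. ratio_coeff N n i (\<Sum>q<p. l q) * (\<Prod>q<p. g q (l q)))
      = (\<Sum>L<n i. ratio_coeff N n i L * (\<Prod>q<p. Abs_fps (g q)) $ L)"
    unfolding PI_def using ni
    by (intro sum_PiE_fps_prod) (auto simp: ratio_coeff_eq_0)
  also have "(\<Prod>q<p. Abs_fps (g q)) = Abs_fps (g i) * (\<Prod>q\<in>{..<p}-{i}. Abs_fps (g q))"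
    using i by (simp add: prod.remove)
  also have "(\<Prod>q\<in>{..<p}-{i}. Abs_fps (g q)) = gen_prod n i"
    unfolding gen_prod_def g_def by (intro prod.cong) (auto simp: series_coeff_fps)
  finally show ?thesis by (simp add: g_def)
qed

lemma kr_poly_pochhammer_moment:
  assumes i: "i < p" and ni: "1 \<le> n i" and AN: "abs_multi p n \<le> N"
  shows "(\<Sum>k\<le>N. pochhammer (real k - real N) j * poly (kr_poly N n i) (real k) * kr_weight N (pr i) k)
     = pochhammer (- real N) j / pochhammer (- real N) (abs_multi p n - 1) * wcoeff n i j"
proof -
  define A where "A = abs_multi p n"
  define m where "m = n i - 1"
  define r where "r = A - n i"
  define y where "y = (1 - pr i) ^ j"
  define G where "G = gen_prod n i"
  have "n i \<le> A" unfolding A_def abs_multi_def using i by (intro member_le_sum) auto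
  then have Arm: "A = r + m + 1" "n i = Suc m" using ni by (auto simp: r_def m_def)
  have rN: "r + m < N" using Arm AN by (simp add: A_def)
  have ratio: "ratio_coeff N n i L = pochhammer (- real m) L / pochhammer (- real N + real r) L" for L
    using Arm unfolding ratio_coeff_def A_def[symmetric] by simp
  have LHS: "(\<Sum>k\<le>N. pochhammer (real k - real N) j * poly (kr_poly N n i) (real k) * kr_weight N (pr i) k)
      = kr_const N n i * (pochhammer (- real N) j * y / pochhammer (- real N + real r) m *
          ((-1) ^ m * fact m * (binomial_series (real r + real m - 1 - real j) (-1) * G) $ m))"
    unfolding kr_poly_moment_expand[where N = N and j = j and n = n and i = i, OF i ni] ratio Arm(2) G_def y_def
    by (simp only: pochhammer_ratio_conv_coeff[OF rN])
  have e: "real r + real m - 1 - real j = real (abs_multi p n) - 2 - real j"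
    using Arm by (simp add: A_def)
  have pw: "(1 - pr i) powi (int j - int m) = y / (1 - pr i) ^ m"
    using pr_range[OF i] by (simp add: y_def power_int_diff)
  have W: "wcoeff n i j
      = y / (1 - pr i) ^ m * scale n i * (binomial_series (real r + real m - 1 - real j) (-1) * G) $ m"
    unfolding wcoeff_def using ni by (simp add: G_def Arm(2) e pw)
  have "pochhammer (- real N) (A - 1) = pochhammer (- real N) r * pochhammer (- real N + real r) m"
    using Arm by (simp add: pochhammer_product')
  moreover have "pochhammer (- real N) r \<noteq> 0" using rN by (simp add: pochhammer_of_nat_eq_0_iff)
  moreover have "pochhammer (- real N + real r) m \<noteq> 0"
    unfolding pochhammer_eq_0_iff using rN by auto
  moreover have "(1 - pr i) ^ m \<noteq> 0" using pr_range[OF i] by simp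
  moreover have "A - Suc m = r" using Arm by simp
  ultimately show ?thesis
    unfolding LHS W kr_const_def A_def[symmetric] Arm(2)
    using neg_one_power_square[of m] by (simp add: field_simps)
qed

definition moment :: "nat \<Rightarrow> (nat \<Rightarrow> real poly) \<Rightarrow> real poly \<Rightarrow> real" where
  "moment N K T = (\<Sum>i<p. \<Sum>k\<le>N. poly T (real k) * poly (K i) (real k) * kr_weight N (pr i) k)"

lemma moment_add: "moment N K (S + T) = moment N K S + moment N K T"
  by (simp add: moment_def algebra_simps sum.distrib)

lemma moment_smult: "moment N K (smult c T) = c * moment N K T"
  by (simp add: moment_def sum_distrib_left mult_ac)

lemma moment_diff_family:
  "moment N (\<lambda>i. Q i - smult c (P i)) T = moment N Q T - c * moment N P T"
  by (simp add: moment_def algebra_simps sum_subtractf sum_distrib_left)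

lemma is_typeI_iff:
  "is_typeI p N pr n K \<longleftrightarrow> typeI_degree_bounds p n K \<and>
     (\<forall>j. j + 1 \<le> abs_multi p n \<longrightarrow> moment N K (monom 1 j) = (if j + 1 = abs_multi p n then 1 else 0))"
  unfolding is_typeI_def typeI_degree_bounds_def moment_def poly_monom
  by (auto simp: mult.assoc)

lemma kr_poly_shifted_moment:
  assumes AN: "abs_multi p n \<le> N" and j: "j + 1 \<le> abs_multi p n"
  shows "moment N (kr_poly N n) (shifted_pochhammer_poly N j) = (if j + 1 = abs_multi p n then 1 else 0)"
proof -
  define c where "c = pochhammer (- real N) j / pochhammer (- real N) (abs_multi p n - 1)"
  have "(\<Sum>k\<le>N. poly (shifted_pochhammer_poly N j) (real k) * poly (kr_poly N n i) (real k)
          * kr_weight N (pr i) k) = c * wcoeff n i j" if "i < p" for i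
    using kr_poly_pochhammer_moment[OF that _ AN, of j]
    by (cases "n i = 0") (simp_all add: kr_poly_def wcoeff_def poly_shifted_pochhammer_poly c_def)
  then have "moment N (kr_poly N n) (shifted_pochhammer_poly N j) = c * (\<Sum>i<p. wcoeff n i j)"
    unfolding moment_def sum_distrib_left by (intro sum.cong) auto
  also have "\<dots> = c * (if j + 1 = abs_multi p n then 1 else 0)"
    using sum_wcoeff[OF refl j] by simp
  also have "\<dots> = (if j + 1 = abs_multi p n then 1 else 0)"
  proof (cases "j + 1 = abs_multi p n")
    case True
    then have "abs_multi p n - 1 = j" by simp
    then show ?thesis using True AN by (simp add: c_def pochhammer_of_nat_eq_0_iff)
  qed simp
  finally show ?thesis .
qed

lemma kr_poly_is_typeI:
  assumes "abs_multi p n \<le> N"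
  shows "is_typeI p N pr n (kr_poly N n)"
  unfolding is_typeI_iff
proof (intro conjI allI impI)
  show "typeI_degree_bounds p n (kr_poly N n)"
    unfolding typeI_degree_bounds_def using degree_kr_poly by (simp add: kr_poly_eq_0)
  fix j assume j: "j + 1 \<le> abs_multi p n"
  have "degree (monom (1::real) j) \<le> abs_multi p n - 1" using j by (simp add: degree_monom_eq)
  with j show "moment N (kr_poly N n) (monom 1 j) = (if j + 1 = abs_multi p n then 1 else 0)"
    using functional_eq_coeff_if_shifted_pochhammer[OF moment_add moment_smult
        kr_poly_shifted_moment[OF assms]]
    by (auto simp: coeff_monom)
qed

lemma typeI_family_eq_0:
  "abs_multi p n = A \<Longrightarrow> A \<le> N \<Longrightarrow> typeI_degree_bounds p n Q \<Longrightarrow>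
   (\<forall>j. j + 1 \<le> A \<longrightarrow> moment N Q (monom 1 j) = 0) \<Longrightarrow> \<forall>i<p. Q i = 0"
proof (induction A arbitrary: n Q)
  case 0
  then have "n i = 0" if "i < p" for i
    using that unfolding abs_multi_def by (simp add: sum_eq_0_iff)
  then show ?case using 0(3) by (simp add: typeI_degree_bounds_def)
next
  case (Suc A)
  obtain k where k: "k < p" "1 \<le> n k"
    using abs_multi_pos[of p n] Suc.prems(1) by auto
  define P where "P = kr_poly N n"
  have "is_typeI p N pr n P" unfolding P_def using Suc.prems(1,2) by (intro kr_poly_is_typeI) simp
  then have P: "typeI_degree_bounds p n P"
      "\<And>j. j + 1 \<le> Suc A \<Longrightarrow> moment N P (monom 1 j) = (if j = A then 1 else 0)"
    unfolding is_typeI_iff Suc.prems(1) by auto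
  have lower: "\<forall>i<p. R i = 0"
    if "typeI_degree_bounds p n R" "coeff (R k) (n k - 1) = 0"
      "\<forall>j. j + 1 \<le> A \<longrightarrow> moment N R (monom 1 j) = 0" for R
  proof (rule Suc.IH)
    show "abs_multi p (n(k := n k - 1)) = A"
      using abs_multi_decrement[of k p n, OF k] Suc.prems(1) by simp
    show "A \<le> N" using Suc.prems(2) by simp
    show "typeI_degree_bounds p (n(k := n k - 1)) R"
      using k(1) that(1,2) by (rule typeI_degree_bounds_decrement)
  qed (use that(3) in simp)
  have "coeff (P k) (n k - 1) \<noteq> 0"
  proof
    assume "coeff (P k) (n k - 1) = 0"
    then have "\<forall>i<p. P i = 0" using lower[OF P(1)] P(2) by simp
    then have "moment N P (monom 1 A) = 0" by (simp add: moment_def)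
    then show False using P(2)[of A] by simp
  qed
  define c where "c = coeff (Q k) (n k - 1) / coeff (P k) (n k - 1)"
  define Q' where "Q' = (\<lambda>i. Q i - smult c (P i))"
  have "\<forall>i<p. Q' i = 0"
  proof (rule lower)
    show "typeI_degree_bounds p n Q'"
      unfolding Q'_def using Suc.prems(3) P(1) by (rule typeI_degree_bounds_diff)
    show "coeff (Q' k) (n k - 1) = 0"
      using \<open>coeff (P k) (n k - 1) \<noteq> 0\<close> by (simp add: Q'_def c_def)
    show "\<forall>j. j + 1 \<le> A \<longrightarrow> moment N Q' (monom 1 j) = 0"
      using Suc.prems(4) P(2) by (simp add: Q'_def moment_diff_family)
  qed
  moreover from this have "moment N Q' (monom 1 A) = 0" by (simp add: moment_def)
  then have "c = 0" using Suc.prems(4) P(2)[of A] by (simp add: Q'_def moment_diff_family)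
  ultimately show ?case by (simp add: Q'_def)
qed

lemma is_typeI_iff_eq_kr_poly:
  assumes "abs_multi p n \<le> N"
  shows "is_typeI p N pr n K \<longleftrightarrow> (\<forall>i<p. K i = kr_poly N n i)"
proof
  have P: "is_typeI p N pr n (kr_poly N n)" using assms by (rule kr_poly_is_typeI)
  show "is_typeI p N pr n K" if "\<forall>i<p. K i = kr_poly N n i"
    using P that by (simp add: is_typeI_def)
  assume K: "is_typeI p N pr n K"
  have "\<forall>i<p. K i - smult 1 (kr_poly N n i) = 0"
  proof (rule typeI_family_eq_0[OF refl assms])
    show "typeI_degree_bounds p n (\<lambda>i. K i - smult 1 (kr_poly N n i))"
      using K P by (intro typeI_degree_bounds_diff) (simp_all add: is_typeI_iff)
    show "\<forall>j. j + 1 \<le> abs_multi p n \<longrightarrow> moment N (\<lambda>i. K i - smult 1 (kr_poly N n i)) (monom 1 j) = 0"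
      using K P by (simp add: is_typeI_iff moment_diff_family[where c = 1, simplified])
  qed
  then show "\<forall>i<p. K i = kr_poly N n i" by simp
qed

end

theorem mainTheorem13:
  fixes p N :: nat and pr :: "nat \<Rightarrow> real" and n :: "nat \<Rightarrow> nat"
    and K :: "nat \<Rightarrow> real poly"
  assumes "\<And>q. q < p \<Longrightarrow> 0 < pr q \<and> pr q < 1"
    and "inj_on pr {..<p}"
    and "abs_multi p n \<le> N"
  shows "is_typeI p N pr n K \<longleftrightarrow>
    (\<forall>i<p. (n i = 0 \<longrightarrow> K i = 0) \<and>
           (1 \<le> n i \<longrightarrow> (\<forall>x. poly (K i) x = kr_formula p N pr n i x)))"
proof -
  interpret kravchuk_weights p pr using assms(1,2) by unfold_locales
  have "K i = kr_poly N n i \<longleftrightarrow>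
      (n i = 0 \<longrightarrow> K i = 0) \<and> (1 \<le> n i \<longrightarrow> (\<forall>x. poly (K i) x = kr_formula p N pr n i x))" for i
    by (cases "n i = 0")
      (auto simp: kr_poly_eq_0 poly_kr_poly_eq_kr_formula poly_eq_poly_eq_iff[symmetric])
  then show ?thesis using is_typeI_iff_eq_kr_poly[OF assms(3)] by simp
qed

end
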